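(* The following hold: \begin{equation*} \frac{V(n,x)}{V (n-1,x)}<\frac{x+\sqrt{4n-2+x^2}}{2},\quad x>0,\ n\in (2k-1,2k),\ k\in {\mathbb N}; \end{equation*} \begin{equation*} \frac{x+\sqrt{4n-6+x^2}}{2}<\frac{V(n,x)}{V (n-1,x)},\quad x>0,\ n\in (2k,2k+1),\ k\in {\mathbb N}; \end{equation*} \begin{equation*} -i\frac{H_{2k+1}(ix)}{H_{2k}(ix)}<x+\sqrt{4k+2+x^2},\quad x>0,\ k =0,1,2,\ldots; \end{equation*} \begin{equation*} i\frac{H_{2k-1}(ix)}{H_{2k}(ix)}<(x+\sqrt{4k-2+x^2})^{-1},\quad x>0,\ k\in{\mathbb N}; \end{equation*} \begin{equation*} \frac{H_{2k}(ix)^2}{H_{2k-1}(ix)H_{2k+1}(ix)}>\sqrt{\frac{k-1/2}{k+1/2}},\quad k\in {\mathbb N},\ x\in {\mathbb R}. \end{equation*}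
   Context: $V(a,x)$ denotes the standard second parabolic cylinder function (as in the NIST Digital Library of Mathematical Functions, Chapter 12), a solution of $y''(x)-(x^2/4+a)y(x)=0$ that is dominant as $x\rightarrow+\infty$; $H_n$ denotes the Hermite polynomial of degree $n$ (with positive leading coefficient $2^n$), evaluated here at imaginary argument $ix$. The parameter $n$ is real and $i$ is the imaginary unit. *)

theory Defs
  imports "HOL-Analysis.Analysis"
begin

definition kummerM :: "real \<Rightarrow> real \<Rightarrow> real \<Rightarrow> real" where
  "kummerM a b z = (\<Sum>k. pochhammer a k / pochhammer b k * z ^ k / fact k)"

text \<open>Even and odd standard solutions of Weber's equation (DLMF 12.4, 12.7.12-13).\<close>
definition pcf_u1 :: "real \<Rightarrow> real \<Rightarrow> real" where
  "pcf_u1 a x = exp (- x\<^sup>2 / 4) * kummerM (a/2 + 1/4) (1/2) (x\<^sup>2 / 2)"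

definition pcf_u2 :: "real \<Rightarrow> real \<Rightarrow> real" where
  "pcf_u2 a x = x * exp (- x\<^sup>2 / 4) * kummerM (a/2 + 3/4) (3/2) (x\<^sup>2 / 2)"

text \<open>The second parabolic cylinder function V(a,x) (DLMF 12.4.2 with the initial values
  12.2.8, 12.2.9; 1/Gamma is written with the entire function rGamma).\<close>
definition pcfV :: "real \<Rightarrow> real \<Rightarrow> real" where
  "pcfV a x =
     pi * 2 powr (a/2 + 1/4) * rGamma (1/4 + a/2) * (rGamma (3/4 - a/2))\<^sup>2 * pcf_u1 a x
   + pi * 2 powr (a/2 + 3/4) * rGamma (3/4 + a/2) * (rGamma (1/4 - a/2))\<^sup>2 * pcf_u2 a x"

fun hermite :: "nat \<Rightarrow> complex \<Rightarrow> complex" where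
  "hermite 0 z = 1"
| "hermite (Suc 0) z = 2 * z"
| "hermite (Suc (Suc n)) z = 2 * z * hermite (Suc n) z - 2 * of_nat (Suc n) * hermite n z"

end

theory Submission
  imports Defs
begin

text \<open>
  By the recurrences DLMF 12.8.2--3, the ratio \<open>r = V(n,x) / V(n-1,x)\<close> solves the Riccati
  equation \<open>r' = (n - 1/2) + x r - r\<^sup>2\<close>; likewise \<open>h\<^sub>n\<^sub>+\<^sub>1 / h\<^sub>n\<close> for
  \<open>h\<^sub>n(x) = \<i>\<^sup>-\<^sup>n H\<^sub>n(\<i> x)\<close> solves \<open>r' = 2(n+1) + 2 x r - r\<^sup>2\<close>.
  The function \<open>\<lambda>(x) = (a x + sqrt (a\<^sup>2 x\<^sup>2 + 4 c)) / 2\<close>, the positive root of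
  \<open>\<lambda>\<^sup>2 - a x \<lambda> = c\<close>, is a strict super- or subsolution for the right choice of \<open>c\<close>,
  so a ratio that starts on one side of \<open>\<lambda>\<close> at \<open>x = 0\<close> never crosses it.
  At the origin the Weber coefficients are evaluated with the reflection formula: which side the
  ratio starts on is decided by the sign of \<open>sin (\<pi> n)\<close> together with the log-convexity bounds
  \<open>sqrt (s - 1/2) \<Gamma>(s) \<le> \<Gamma>(s + 1/2) \<le> sqrt s \<Gamma>(s)\<close> with \<open>s = n/2 - 1/4\<close>; for the Hermite
  polynomials the odd one vanishes at the origin. Multiplying the two Hermite bounds gives the Turan-type inequality.
\<close>

section \<open>Kummer's function\<close>

definition kummer_coeff :: "real \<Rightarrow> real \<Rightarrow> nat \<Rightarrow> real" where
  "kummer_coeff a b k = pochhammer a k / pochhammer b k / fact k"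

lemma kummerM_eq_suminf: "kummerM a b z = (\<Sum>k. kummer_coeff a b k * z ^ k)"
  unfolding kummerM_def kummer_coeff_def by (simp add: field_simps)

lemma kummer_coeff_Suc:
  "b > 0 \<Longrightarrow> kummer_coeff a b (Suc k) = kummer_coeff a b k * ((a + k) / ((b + k) * (k + 1)))"
  unfolding kummer_coeff_def using pochhammer_pos[of b k]
  by (simp add: pochhammer_Suc field_simps)

lemma summable_kummer_series:
  assumes b: "b > 0" shows "summable (\<lambda>k. kummer_coeff a b k * z ^ k)"
proof -
  define C where "C = \<bar>a\<bar> / b + 1"
  define N where "N = nat \<lceil>2 * C * \<bar>z\<bar>\<rceil>"
  show ?thesis
  proof (rule summable_ratio_test[where c = "1/2" and N = N])
    fix n assume "n \<ge> N"
    hence hN: "2 * C * \<bar>z\<bar> \<le> real n + 1" unfolding N_def by linarith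
    have bn: "b + real n > 0" using b by simp
    have "\<bar>a\<bar> + real n \<le> C * (b + real n)"
      using b unfolding C_def by (simp add: field_simps)
    hence "\<bar>a + real n\<bar> \<le> C * (b + real n)" by linarith
    hence "\<bar>a + real n\<bar> * \<bar>z\<bar> \<le> C * (b + real n) * \<bar>z\<bar>" by (rule mult_right_mono) simp
    also have "\<dots> = (b + real n) * (C * \<bar>z\<bar>)" by simp
    also have "\<dots> \<le> (b + real n) * ((real n + 1) / 2)"
      using hN bn by (intro mult_left_mono) auto
    finally have ratio: "\<bar>a + real n\<bar> * \<bar>z\<bar> / ((b + real n) * (real n + 1)) \<le> 1/2"
      using bn by (simp add: divide_simps)
    have "norm (kummer_coeff a b (Suc n) * z ^ Suc n) =
          norm (kummer_coeff a b n * z ^ n) * (\<bar>a + real n\<bar> * \<bar>z\<bar> / ((b + real n) * (real n + 1)))"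
    proof -
      have "kummer_coeff a b (Suc n) * z ^ Suc n =
            kummer_coeff a b n * z ^ n * ((a + real n) * z / ((b + real n) * (real n + 1)))"
        using b by (simp add: kummer_coeff_Suc field_simps)
      thus ?thesis using bn by (simp add: abs_mult)
    qed
    also have "\<dots> \<le> norm (kummer_coeff a b n * z ^ n) * (1/2)"
      by (rule mult_left_mono[OF ratio]) simp
    finally show "norm (kummer_coeff a b (Suc n) * z ^ Suc n) \<le> 1/2 * norm (kummer_coeff a b n * z ^ n)"
      by simp
  qed simp
qed

lemma sums_kummerM: "b > 0 \<Longrightarrow> (\<lambda>k. kummer_coeff a b k * z ^ k) sums kummerM a b z"
  unfolding kummerM_eq_suminf by (rule summable_sums[OF summable_kummer_series])

lemma diffs_kummer_coeff:
  assumes b: "b > 0" shows "diffs (kummer_coeff a b) = (\<lambda>k. a / b * kummer_coeff (a + 1) (b + 1) k)"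
proof
  fix k
  define m where "m = real k + 1"
  have "pochhammer (b + 1) k > 0" using b by (intro pochhammer_pos) simp
  moreover have "m > 0" "fact (Suc k) = m * (fact k :: real)" "of_nat (Suc k) = m"
    unfolding m_def by simp_all
  ultimately show "diffs (kummer_coeff a b) k = a / b * kummer_coeff (a + 1) (b + 1) k"
    using b unfolding diffs_def kummer_coeff_def pochhammer_rec[of a k] pochhammer_rec[of b k]
    by (simp add: field_simps)
qed

lemma sums_diffs_kummer_coeff:
  "b > 0 \<Longrightarrow> (\<lambda>k. diffs (kummer_coeff a b) k * z ^ k) sums (a / b * kummerM (a + 1) (b + 1) z)"
  using sums_mult[OF sums_kummerM[of "b + 1" "a + 1" z], of "a / b"]
  by (simp add: diffs_kummer_coeff mult.assoc)

lemma kummerM_has_real_derivative: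
  assumes "b > 0"
  shows "(kummerM a b has_real_derivative a / b * kummerM (a + 1) (b + 1) z) (at z)"
proof -
  have "((\<lambda>z. \<Sum>k. kummer_coeff a b k * z ^ k) has_real_derivative
          (\<Sum>k. diffs (kummer_coeff a b) k * z ^ k)) (at z)"
    by (rule termdiffs_strong_converges_everywhere) (rule summable_kummer_series[OF assms])
  also have "(\<Sum>k. diffs (kummer_coeff a b) k * z ^ k) = a / b * kummerM (a + 1) (b + 1) z"
    by (rule sums_unique[OF sums_diffs_kummer_coeff[OF assms], symmetric])
  finally show ?thesis unfolding kummerM_eq_suminf[abs_def] .
qed

lemma kummerM_0: "kummerM a b 0 = 1"
  unfolding kummerM_eq_suminf by (subst powser_zero) (simp add: kummer_coeff_def)

lemma kummerM_pos:
  assumes "a > 0" "b > 0" "z \<ge> 0" shows "kummerM a b z > 0"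
  unfolding kummerM_eq_suminf
proof (rule suminf_pos2[where i = 0])
  show "summable (\<lambda>k. kummer_coeff a b k * z ^ k)" by (rule summable_kummer_series) (use assms in simp)
  show "0 \<le> kummer_coeff a b n * z ^ n" for n
    using assms pochhammer_pos[of b n] pochhammer_pos[of a n] unfolding kummer_coeff_def by simp
qed (simp add: kummer_coeff_def)

lemma kummer_coeff_shift_a: "a * kummer_coeff (a + 1) b k = (a + k) * kummer_coeff a b k"
  unfolding kummer_coeff_def using pochhammer_rec[of a k] pochhammer_Suc[of a k]
  by (simp add: field_simps)

lemma kummer_coeff_shift_b:
  assumes "b > 0" shows "b * kummer_coeff a b k = (b + k) * kummer_coeff a (b + 1) k"
proof -
  define P Q where "P = pochhammer b k" and "Q = pochhammer (b + 1) k"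
  have pos: "P > 0" "Q > 0" unfolding P_def Q_def using assms by (intro pochhammer_pos; simp)+
  have rec: "b * Q = (b + k) * P"
    using pochhammer_rec[of b k] pochhammer_Suc[of b k] unfolding P_def Q_def by (simp add: mult.commute)
  have "b * kummer_coeff a b k = pochhammer a k * (b * Q) / (P * Q * fact k)"
    unfolding kummer_coeff_def P_def[symmetric] using pos by (simp add: field_simps)
  also have "\<dots> = (b + k) * kummer_coeff a (b + 1) k"
    unfolding rec kummer_coeff_def Q_def[symmetric] using pos by (simp add: field_simps)
  finally show ?thesis .
qed

lemma kummer_coeff_Suc_diff_a:
  assumes "b > 0"
  shows "b * (kummer_coeff a b (Suc k) - kummer_coeff (a - 1) b (Suc k)) = kummer_coeff a (b + 1) k"
proof -
  define Q where "Q = pochhammer (b + 1) k"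
  define m where "m = real k + 1"
  have pos: "Q > 0" "m > 0" unfolding Q_def m_def using assms by (simp_all add: pochhammer_pos)
  have num: "pochhammer a (Suc k) - pochhammer (a - 1) (Suc k) = m * pochhammer a k"
    using pochhammer_Suc[of a k] pochhammer_rec[of "a - 1" k] unfolding m_def by (simp add: algebra_simps)
  have den: "pochhammer b (Suc k) = b * Q" "fact (Suc k) = m * (fact k :: real)"
    unfolding Q_def m_def by (simp_all add: pochhammer_rec)
  have "b * (kummer_coeff a b (Suc k) - kummer_coeff (a - 1) b (Suc k))
        = b * ((pochhammer a (Suc k) - pochhammer (a - 1) (Suc k)) / pochhammer b (Suc k) / fact (Suc k))"
    unfolding kummer_coeff_def by (simp add: diff_divide_distrib)
  also have "\<dots> = kummer_coeff a (b + 1) k"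
    unfolding num den kummer_coeff_def Q_def[symmetric] using pos assms by (simp add: field_simps)
  finally show ?thesis .
qed

lemma sums_shift_mult:
  fixes c :: "nat \<Rightarrow> real"
  assumes "(\<lambda>k. c k * z ^ k) sums S"
  shows "(\<lambda>k. (case k of 0 \<Rightarrow> 0 | Suc j \<Rightarrow> c j) * z ^ k) sums (z * S)"
proof -
  have "(\<lambda>k. z * (c k * z ^ k)) sums (z * S)" by (rule sums_mult[OF assms])
  hence "(\<lambda>k. (case Suc k of 0 \<Rightarrow> 0 | Suc j \<Rightarrow> c j) * z ^ Suc k) sums (z * S)"
    by (simp add: mult_ac)
  thus ?thesis by (subst (asm) sums_Suc_iff) simp
qed

lemma sums_of_nat_mult:
  fixes c :: "nat \<Rightarrow> real"
  assumes "(\<lambda>k. diffs c k * z ^ k) sums D"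
  shows "(\<lambda>k. (of_nat k * c k) * z ^ k) sums (z * D)"
proof -
  have "(\<lambda>k. (case k of 0 \<Rightarrow> 0 | Suc j \<Rightarrow> diffs c j) * z ^ k) = (\<lambda>k. (of_nat k * c k) * z ^ k)"
    by (rule ext) (simp add: diffs_def split: nat.split)
  thus ?thesis using sums_shift_mult[OF assms] by simp
qed

lemma kummerM_contiguous_b:
  assumes b: "b > 0"
  shows "b * kummerM a b z = b * kummerM a (b + 1) z + z * (a / (b + 1) * kummerM (a + 1) (b + 2) z)"
proof -
  have "(\<lambda>k. b * (kummer_coeff a (b + 1) k * z ^ k) + (of_nat k * kummer_coeff a (b + 1) k) * z ^ k) sums
        (b * kummerM a (b + 1) z + z * (a / (b + 1) * kummerM (a + 1) (b + 2) z))"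
    using b sums_of_nat_mult[OF sums_diffs_kummer_coeff[of "b + 1" a z]]
    by (intro sums_add sums_mult sums_kummerM) (simp_all add: add.assoc)
  also have "(\<lambda>k. b * (kummer_coeff a (b + 1) k * z ^ k) + (of_nat k * kummer_coeff a (b + 1) k) * z ^ k)
           = (\<lambda>k. b * (kummer_coeff a b k * z ^ k))"
  proof
    fix k
    have "b * (kummer_coeff a (b + 1) k * z ^ k) + (of_nat k * kummer_coeff a (b + 1) k) * z ^ k
          = ((b + k) * kummer_coeff a (b + 1) k) * z ^ k" by (simp add: algebra_simps)
    also have "\<dots> = b * (kummer_coeff a b k * z ^ k)" by (simp add: kummer_coeff_shift_b[OF b])
    finally show "b * (kummer_coeff a (b + 1) k * z ^ k) + (of_nat k * kummer_coeff a (b + 1) k) * z ^ k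
          = b * (kummer_coeff a b k * z ^ k)" .
  qed
  finally show ?thesis using sums_mult[OF sums_kummerM[OF b], of b] by (simp add: sums_iff)
qed

lemma kummerM_contiguous_a:
  assumes b: "b > 0"
  shows "a * kummerM (a + 1) (b + 1) z - b * kummerM a b z = (a - b) * kummerM a (b + 1) z"
proof -
  have "(\<lambda>k. a * (kummer_coeff (a + 1) (b + 1) k * z ^ k) - b * (kummer_coeff a b k * z ^ k)) sums
        (a * kummerM (a + 1) (b + 1) z - b * kummerM a b z)"
    using b by (intro sums_diff sums_mult sums_kummerM) simp_all
  also have "(\<lambda>k. a * (kummer_coeff (a + 1) (b + 1) k * z ^ k) - b * (kummer_coeff a b k * z ^ k))
           = (\<lambda>k. (a - b) * (kummer_coeff a (b + 1) k * z ^ k))"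
  proof
    fix k
    have "a * (kummer_coeff (a + 1) (b + 1) k * z ^ k) - b * (kummer_coeff a b k * z ^ k)
          = (a * kummer_coeff (a + 1) (b + 1) k - b * kummer_coeff a b k) * z ^ k"
      by (simp add: algebra_simps)
    also have "\<dots> = ((a + k) * kummer_coeff a (b + 1) k - (b + k) * kummer_coeff a (b + 1) k) * z ^ k"
      by (simp only: kummer_coeff_shift_a kummer_coeff_shift_b[OF b])
    also have "\<dots> = (a - b) * (kummer_coeff a (b + 1) k * z ^ k)" by (simp add: algebra_simps)
    finally show "a * (kummer_coeff (a + 1) (b + 1) k * z ^ k) - b * (kummer_coeff a b k * z ^ k)
          = (a - b) * (kummer_coeff a (b + 1) k * z ^ k)" .
  qed
  finally show ?thesis
    using b sums_mult[OF sums_kummerM[of "b + 1" a z], of "a - b"] by (simp add: sums_iff)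
qed

lemma kummerM_contiguous_ab:
  assumes b: "b > 0"
  shows "b * kummerM a b z - b * kummerM (a - 1) b z = z * kummerM a (b + 1) z"
proof -
  have "(\<lambda>k. b * (kummer_coeff a b k * z ^ k) - b * (kummer_coeff (a - 1) b k * z ^ k)) sums
        (b * kummerM a b z - b * kummerM (a - 1) b z)"
    using b by (intro sums_diff sums_mult sums_kummerM)
  also have "(\<lambda>k. b * (kummer_coeff a b k * z ^ k) - b * (kummer_coeff (a - 1) b k * z ^ k))
           = (\<lambda>k. (case k of 0 \<Rightarrow> 0 | Suc j \<Rightarrow> kummer_coeff a (b + 1) j) * z ^ k)"
  proof
    fix k show "b * (kummer_coeff a b k * z ^ k) - b * (kummer_coeff (a - 1) b k * z ^ k)
           = (case k of 0 \<Rightarrow> 0 | Suc j \<Rightarrow> kummer_coeff a (b + 1) j) * z ^ k"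
    proof (cases k)
      case (Suc j)
      have "b * (kummer_coeff a b k * z ^ k) - b * (kummer_coeff (a - 1) b k * z ^ k)
            = b * (kummer_coeff a b (Suc j) - kummer_coeff (a - 1) b (Suc j)) * z ^ k"
        unfolding Suc by (simp add: algebra_simps)
      thus ?thesis unfolding kummer_coeff_Suc_diff_a[OF b] using Suc by simp
    qed (simp add: kummer_coeff_def)
  qed
  finally show ?thesis using sums_shift_mult[OF sums_kummerM, of "b + 1" a z] b by (simp add: sums_iff)
qed

section \<open>The Weber functions and \<open>V(a,x)\<close>\<close>

lemma kummerM_half_sq_has_real_derivative:
  assumes "b > 0"
  shows "((\<lambda>x. kummerM a b (x\<^sup>2 / 2)) has_real_derivative a / b * kummerM (a + 1) (b + 1) (x\<^sup>2 / 2) * x) (at x)"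
proof -
  have "((\<lambda>x. x\<^sup>2 / 2) has_real_derivative x) (at x)" by (auto intro!: derivative_eq_intros)
  thus ?thesis by (rule DERIV_chain2[OF kummerM_has_real_derivative[OF assms]])
qed

lemma gauss_has_real_derivative:
  "((\<lambda>x::real. exp (- x\<^sup>2 / 4)) has_real_derivative - x / 2 * exp (- x\<^sup>2 / 4)) (at x)"
  by (auto intro!: derivative_eq_intros simp: field_simps)

lemma pcf_u1_has_real_derivative_kummer:
  fixes a x :: real
  defines "c \<equiv> a/2 + 1/4"
  shows "(pcf_u1 a has_real_derivative
          - x / 2 * pcf_u1 a x + 2 * c * x * exp (- x\<^sup>2 / 4) * kummerM (c + 1) (3/2) (x\<^sup>2 / 2)) (at x)"
  unfolding pcf_u1_def[abs_def] c_def
  by (rule DERIV_cong[OF DERIV_mult[OF gauss_has_real_derivative kummerM_half_sq_has_real_derivative]])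
     (simp_all add: field_simps)

lemma pcf_u2_has_real_derivative_kummer:
  fixes a x :: real
  defines "d \<equiv> a/2 + 3/4"
  shows "(pcf_u2 a has_real_derivative
          - x / 2 * pcf_u2 a x + exp (- x\<^sup>2 / 4) *
            (kummerM d (3/2) (x\<^sup>2 / 2) + x\<^sup>2 * (d / (3/2) * kummerM (d + 1) (5/2) (x\<^sup>2 / 2)))) (at x)"
  unfolding pcf_u2_def[abs_def] d_def mult.assoc
  by (rule DERIV_cong[OF DERIV_mult[OF DERIV_ident
        DERIV_mult[OF gauss_has_real_derivative kummerM_half_sq_has_real_derivative]]])
     (simp_all add: field_simps power2_eq_square)

lemma pcf_u1_has_real_derivative:
  "(pcf_u1 a has_real_derivative (a + 1/2) * pcf_u2 (a + 1) x - x / 2 * pcf_u1 a x) (at x)"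
proof (rule DERIV_cong[OF pcf_u1_has_real_derivative_kummer])
  have "(a + 1) / 2 + 3/4 = (a/2 + 1/4) + 1" by (simp add: field_simps)
  thus "- x / 2 * pcf_u1 a x + 2 * (a/2 + 1/4) * x * exp (- x\<^sup>2 / 4) * kummerM (a/2 + 1/4 + 1) (3/2) (x\<^sup>2 / 2)
        = (a + 1/2) * pcf_u2 (a + 1) x - x / 2 * pcf_u1 a x"
    unfolding pcf_u2_def by (simp add: algebra_simps)
qed

lemma pcf_u1_has_real_derivative':
  "(pcf_u1 a has_real_derivative x / 2 * pcf_u1 a x + (a - 1/2) * pcf_u2 (a - 1) x) (at x)"
proof (rule DERIV_cong[OF pcf_u1_has_real_derivative_kummer])
  define c E z where "c = a/2 + 1/4" and "E = exp (- x\<^sup>2 / 4)" and "z = x\<^sup>2 / 2"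
  have "(a - 1) / 2 + 3/4 = c" "a - 1/2 = 2 * c - 1" unfolding c_def by (simp_all add: field_simps)
  hence u: "pcf_u1 a x = E * kummerM c (1/2) z" "pcf_u2 (a - 1) x = x * E * kummerM c (3/2) z"
    unfolding pcf_u1_def pcf_u2_def c_def E_def z_def by simp_all
  have "c * kummerM (c + 1) (1/2 + 1) z - 1/2 * kummerM c (1/2) z = (c - 1/2) * kummerM c (1/2 + 1) z"
    by (rule kummerM_contiguous_a) simp
  from arg_cong[OF this, of "\<lambda>t. 2 * x * E * t"]
  show "- x / 2 * pcf_u1 a x + 2 * (a/2 + 1/4) * x * exp (- x\<^sup>2 / 4) * kummerM (a/2 + 1/4 + 1) (3/2) (x\<^sup>2 / 2)
        = x / 2 * pcf_u1 a x + (a - 1/2) * pcf_u2 (a - 1) x"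
    unfolding u \<open>a - 1/2 = 2 * c - 1\<close> c_def[symmetric] E_def[symmetric] z_def[symmetric]
    by (simp add: algebra_simps)
qed

lemma pcf_u2_has_real_derivative:
  "(pcf_u2 a has_real_derivative pcf_u1 (a + 1) x - x / 2 * pcf_u2 a x) (at x)"
proof (rule DERIV_cong[OF pcf_u2_has_real_derivative_kummer])
  define d where "d = a/2 + 3/4"
  have "1/2 * kummerM d (1/2) (x\<^sup>2 / 2)
        = 1/2 * kummerM d (1/2 + 1) (x\<^sup>2 / 2) + x\<^sup>2 / 2 * (d / (1/2 + 1) * kummerM (d + 1) (1/2 + 2) (x\<^sup>2 / 2))"
    by (rule kummerM_contiguous_b) simp
  moreover have "(a + 1) / 2 + 1/4 = d" unfolding d_def by (simp add: field_simps)
  ultimately show "- x / 2 * pcf_u2 a x + exp (- x\<^sup>2 / 4) *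
          (kummerM (a/2 + 3/4) (3/2) (x\<^sup>2 / 2) + x\<^sup>2 * ((a/2 + 3/4) / (3/2) * kummerM (a/2 + 3/4 + 1) (5/2) (x\<^sup>2 / 2)))
        = pcf_u1 (a + 1) x - x / 2 * pcf_u2 a x"
    unfolding pcf_u1_def d_def[symmetric] by (simp add: algebra_simps)
qed

lemma pcf_u2_has_real_derivative':
  "(pcf_u2 a has_real_derivative x / 2 * pcf_u2 a x + pcf_u1 (a - 1) x) (at x)"
proof (rule DERIV_cong[OF pcf_u2_has_real_derivative])
  define d E z where "d = a/2 + 3/4" and "E = exp (- x\<^sup>2 / 4)" and "z = x\<^sup>2 / 2"
  have "(a + 1) / 2 + 1/4 = d" "(a - 1) / 2 + 1/4 = d - 1" unfolding d_def by (simp_all add: field_simps)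
  hence u: "pcf_u1 (a + 1) x = E * kummerM d (1/2) z" "pcf_u1 (a - 1) x = E * kummerM (d - 1) (1/2) z"
    "pcf_u2 a x = x * E * kummerM d (3/2) z"
    unfolding pcf_u1_def pcf_u2_def d_def[symmetric] E_def z_def by simp_all
  have "1/2 * kummerM d (1/2) z - 1/2 * kummerM (d - 1) (1/2) z = z * kummerM d (1/2 + 1) z"
    by (rule kummerM_contiguous_ab) simp
  thus "pcf_u1 (a + 1) x - x / 2 * pcf_u2 a x = x / 2 * pcf_u2 a x + pcf_u1 (a - 1) x"
    unfolding u z_def by (simp add: algebra_simps power2_eq_square)
qed

definition pcfV_init :: "real \<Rightarrow> real" where
  "pcfV_init a = pi * 2 powr (a/2 + 1/4) * rGamma (1/4 + a/2) * (rGamma (3/4 - a/2))\<^sup>2"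

lemma pcfV_eq: "pcfV a x = pcfV_init a * pcf_u1 a x + pcfV_init (a + 1) * pcf_u2 a x"
proof -
  have shift: "(a + 1) / 2 + 1/4 = a/2 + 3/4" "1/4 + (a + 1) / 2 = 3/4 + a/2"
    "3/4 - (a + 1) / 2 = 1/4 - a/2"
    by (simp_all add: field_simps)
  show ?thesis unfolding pcfV_init_def shift unfolding pcfV_def ..
qed

lemma pcfV_at_0: "pcfV a 0 = pcfV_init a"
  unfolding pcfV_eq pcf_u1_def pcf_u2_def by (simp add: kummerM_0)

lemma pcfV_init_add_2: "pcfV_init (a + 2) = (a + 1/2) * pcfV_init a"
proof -
  define u where "u = 1/4 + a/2"
  have shift: "(a + 2) / 2 + 1/4 = u + 1" "1/4 + (a + 2) / 2 = u + 1" "3/4 - (a + 2) / 2 = - u"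
       "a/2 + 1/4 = u" "1/4 + a/2 = u" "3/4 - a/2 = 1 - u" "a + 1/2 = 2 * u"
    unfolding u_def by (simp_all add: field_simps)
  have "rGamma u = u * rGamma (u + 1)" "rGamma (- u) = - u * rGamma (1 - u)"
    using rGamma_plus1[of u] rGamma_plus1[of "- u"] by simp_all
  moreover have "2 powr (u + 1) = 2 * 2 powr u" by (simp add: powr_add)
  ultimately show ?thesis unfolding pcfV_init_def shift by (simp add: algebra_simps power2_eq_square)
qed

lemma pcfV_has_real_derivative:
  "(pcfV a has_real_derivative pcfV (a + 1) x - x / 2 * pcfV a x) (at x)"
proof -
  have "((\<lambda>x. pcfV_init a * pcf_u1 a x + pcfV_init (a + 1) * pcf_u2 a x) has_real_derivative
        pcfV_init a * ((a + 1/2) * pcf_u2 (a + 1) x - x / 2 * pcf_u1 a x)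
        + pcfV_init (a + 1) * (pcf_u1 (a + 1) x - x / 2 * pcf_u2 a x)) (at x)"
    by (intro DERIV_add DERIV_cmult pcf_u1_has_real_derivative pcf_u2_has_real_derivative)
  moreover have rec: "pcfV_init (a + 1 + 1) = (a + 1/2) * pcfV_init a"
    using pcfV_init_add_2[of a] by (simp add: add.assoc)
  ultimately show ?thesis
    unfolding pcfV_eq[abs_def] pcfV_eq[of "a + 1"] rec by (simp add: algebra_simps)
qed

lemma pcfV_has_real_derivative':
  "(pcfV a has_real_derivative x / 2 * pcfV a x + (a - 1/2) * pcfV (a - 1) x) (at x)"
proof -
  have D: "((\<lambda>x. pcfV_init a * pcf_u1 a x + pcfV_init (a + 1) * pcf_u2 a x) has_real_derivative
        pcfV_init a * (x / 2 * pcf_u1 a x + (a - 1/2) * pcf_u2 (a - 1) x)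
        + pcfV_init (a + 1) * (x / 2 * pcf_u2 a x + pcf_u1 (a - 1) x)) (at x)"
    by (intro DERIV_add DERIV_cmult pcf_u1_has_real_derivative' pcf_u2_has_real_derivative')
  have rec: "pcfV_init (a + 1) = (a - 1/2) * pcfV_init (a - 1)"
    using pcfV_init_add_2[of "a - 1"] by (simp add: algebra_simps)
  show ?thesis
    unfolding pcfV_eq[abs_def] pcfV_eq[of "a - 1"]
    by (rule DERIV_cong[OF D]) (unfold rec, simp add: algebra_simps)
qed

lemma rGamma_real_pos: "(x::real) > 0 \<Longrightarrow> rGamma x > 0"
  unfolding rGamma_inverse_Gamma using Gamma_real_pos[of x] by simp

lemma pcfV_init_nonneg: "a > -1/2 \<Longrightarrow> pcfV_init a \<ge> 0"
  unfolding pcfV_init_def using rGamma_real_pos[of "1/4 + a/2"] by simp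

lemma pcfV_init_pos_or_next_pos:
  assumes "a > -1/2" shows "pcfV_init a > 0 \<or> pcfV_init (a + 1) > 0"
proof (rule ccontr)
  assume "\<not> ?thesis"
  with assms pcfV_init_nonneg[of a] pcfV_init_nonneg[of "a + 1"]
  have "pcfV_init a = 0" "pcfV_init (a + 1) = 0" by auto
  moreover have "rGamma (1/4 + a/2) > 0" "rGamma (1/4 + (a + 1) / 2) > 0"
    using assms by (auto intro!: rGamma_real_pos simp: field_simps)
  ultimately have "rGamma (3/4 - a/2) = 0" "rGamma (3/4 - (a + 1) / 2) = 0"
    unfolding pcfV_init_def by auto
  hence "3/4 - a/2 \<in> \<int>" "3/4 - (a + 1) / 2 \<in> \<int>"
    by (auto simp: rGamma_eq_zero_iff elim: nonpos_Ints_cases)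
  hence "(3/4 - a/2) - (3/4 - (a + 1) / 2) \<in> \<int>" by (rule Ints_diff)
  moreover have "(3/4 - a/2) - (3/4 - (a + 1) / 2) = (1/2 :: real)" by (simp add: field_simps)
  ultimately show False using fraction_not_in_Ints[of 2 1, where 'a = real] by simp
qed

lemma pcfV_pos:
  assumes a: "a > -1/2" and x: "x > 0" shows "pcfV a x > 0"
proof -
  have "pcf_u1 a x > 0" "pcf_u2 a x > 0"
    unfolding pcf_u1_def pcf_u2_def using a x by (intro mult_pos_pos exp_gt_zero kummerM_pos; simp)+
  thus ?thesis
    unfolding pcfV_eq[of a x]
    using pcfV_init_pos_or_next_pos[OF a] pcfV_init_nonneg[of a] pcfV_init_nonneg[of "a + 1"] a
    by (auto intro: add_pos_nonneg add_nonneg_pos)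
qed

section \<open>Values at the origin\<close>

lemma Gamma_midpoint_sq_le:
  assumes "x > 0" "y > 0" shows "Gamma ((x + y) / 2) ^ 2 \<le> Gamma x * Gamma (y::real)"
proof -
  have "(ln \<circ> Gamma) ((1 - 1/2) *\<^sub>R x + (1/2) *\<^sub>R y) \<le> (1 - 1/2) * (ln \<circ> Gamma) x + (1/2) * (ln \<circ> Gamma) y"
    by (rule convex_onD[OF log_convex_Gamma_real]) (use assms in auto)
  hence "2 * ln (Gamma ((x + y) / 2)) \<le> ln (Gamma x) + ln (Gamma y)"
    by (simp add: field_simps)
  moreover have pos: "Gamma ((x + y) / 2) > 0" "Gamma x > 0" "Gamma y > 0" using assms by simp_all
  ultimately have "ln (Gamma ((x + y) / 2) ^ 2) \<le> ln (Gamma x * Gamma y)"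
    by (simp add: ln_mult ln_realpow)
  thus ?thesis using pos by simp
qed

lemma Gamma_plus_half_le:
  assumes s: "s > 0" shows "Gamma (s + 1/2) \<le> sqrt s * Gamma (s::real)"
proof -
  have "Gamma (s + 1/2) ^ 2 \<le> Gamma s * Gamma (s + 1)"
    using Gamma_midpoint_sq_le[of s "s + 1"] s by (simp add: add_divide_distrib)
  also have "\<dots> = (sqrt s * Gamma s) ^ 2"
  proof -
    have "s \<notin> \<int>\<^sub>\<le>\<^sub>0" using s by auto
    thus ?thesis using s by (simp add: Gamma_plus1 power_mult_distrib power2_eq_square)
  qed
  finally show ?thesis by (rule power2_le_imp_le) (use s in simp)
qed

lemma Gamma_plus_half_ge:
  assumes s: "s > 1/2" shows "sqrt (s - 1/2) * Gamma s \<le> Gamma (s + 1/2 :: real)"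
proof -
  define t where "t = s - 1/2"
  have t: "t > 0" "s = t + 1/2" unfolding t_def using s by simp_all
  have "sqrt t * Gamma (t + 1/2) \<le> sqrt t * (sqrt t * Gamma t)"
    using Gamma_plus_half_le[OF t(1)] t(1) by (simp add: mult_left_mono)
  also have "\<dots> = Gamma (t + 1)"
  proof -
    have "t \<notin> \<int>\<^sub>\<le>\<^sub>0" using t by auto
    thus ?thesis using t by (simp add: Gamma_plus1 mult.assoc[symmetric])
  qed
  finally show ?thesis unfolding t_def[symmetric] t(2) by (simp add: add.assoc)
qed

lemma rGamma_reflection_real: "rGamma t * rGamma (1 - t) = sin (pi * t) / pi"
proof -
  have "complex_of_real (rGamma t * rGamma (1 - t)) = rGamma (of_real t) * rGamma (1 - of_real t)"
    by (simp add: rGamma_complex_of_real[symmetric])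
  also have "\<dots> = complex_of_real (sin (pi * t) / pi)"
    by (simp add: rGamma_reflection_complex sin_of_real[symmetric])
  finally show ?thesis by (simp only: of_real_eq_iff)
qed

lemma pcfV_init_reflection:
  assumes s: "s > 0" shows "pcfV_init (2 * s - 1/2) = 2 powr s * sin (pi * s) ^ 2 * Gamma s / pi"
proof -
  have shift: "(2 * s - 1/2) / 2 + 1/4 = s" "1/4 + (2 * s - 1/2) / 2 = s"
    "3/4 - (2 * s - 1/2) / 2 = 1 - s"
    by (simp_all add: field_simps)
  have r: "rGamma s > 0" using s by (rule rGamma_real_pos)
  have refl: "rGamma (1 - s) = sin (pi * s) / (pi * rGamma s)"
    using rGamma_reflection_real[of s] r by (simp add: field_simps)
  have "pcfV_init (2 * s - 1/2) = 2 powr s * sin (pi * s) ^ 2 / (pi * rGamma s)"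
    unfolding pcfV_init_def shift refl using r by (simp add: power2_eq_square field_simps)
  thus ?thesis by (simp add: rGamma_inverse_Gamma field_simps)
qed

lemma pcfV_0_eq_sin:
  assumes "s > 0" shows "pcfV (2 * s - 1/2) 0 = 2 powr s / pi * (sin (pi * s) ^ 2 * Gamma s)"
  unfolding pcfV_at_0 pcfV_init_reflection[OF assms] by simp

lemma pcfV_0_eq_cos:
  assumes s: "s > 0"
  shows "pcfV (2 * s + 1/2) 0 = sqrt 2 * 2 powr s / pi * (cos (pi * s) ^ 2 * Gamma (s + 1/2))"
proof -
  have e: "2 * (s + 1/2) - 1/2 = 2 * s + 1/2" "sin (pi * (s + 1/2)) = cos (pi * s)"
    by (simp_all add: distrib_left sin_add)
  have "pcfV (2 * (s + 1/2) - 1/2) 0 = 2 powr (s + 1/2) / pi * (sin (pi * (s + 1/2)) ^ 2 * Gamma (s + 1/2))"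
    by (rule pcfV_0_eq_sin) (use s in simp)
  thus ?thesis unfolding e by (simp add: powr_add powr_half_sqrt mult_ac)
qed

lemma sin_pi_sign:
  assumes "real k < x" "x < real k + 1" shows "(-1) ^ k * sin (pi * x) > 0"
proof -
  have "sin (pi * x) = (-1) ^ k * sin (pi * (x - k))"
    using sin_add[of "pi * (x - k)" "real k * pi"] by (simp add: algebra_simps)
  moreover have "sin (pi * (x - k)) > 0" using assms by (intro sin_gt_zero) simp_all
  ultimately show ?thesis by (simp flip: power_mult_distrib)
qed

lemma cos_sq_minus_sin_sq_pi: "cos (pi * s) ^ 2 - sin (pi * s) ^ 2 = sin (pi * (2 * s + 1/2))"
proof -
  have "sin (pi * (2 * s + 1/2)) = cos (2 * (pi * s))"
    by (simp add: distrib_left sin_add mult.left_commute)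
  thus ?thesis by (simp add: cos_double)
qed

lemma pcfV_0_upper:
  assumes k: "k \<ge> 1" and n: "2 * real k - 1 < n" "n < 2 * real k"
  shows "pcfV n 0 < sqrt (n - 1/2) * pcfV (n - 1) 0"
proof -
  define s where "s = n/2 - 1/4"
  have "real k \<ge> 1" using k by simp
  hence s: "s > 0" and n_eq: "n = 2 * s + 1/2" using n unfolding s_def by (simp_all add: field_simps)
  have "real (2 * k - 1) = 2 * real k - 1" using k by (simp add: of_nat_diff)
  hence "(-1) ^ (2 * k - 1) * sin (pi * n) > 0" using n sin_pi_sign[of "2 * k - 1" n] by simp
  moreover have "odd (2 * k - 1)" using k by simp
  ultimately have "sin (pi * n) < 0" by (simp add: zero_less_mult_iff)
  hence cs: "cos (pi * s) ^ 2 < sin (pi * s) ^ 2" using cos_sq_minus_sin_sq_pi[of s] n_eq by simp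
  have "cos (pi * s) ^ 2 * Gamma (s + 1/2) \<le> cos (pi * s) ^ 2 * (sqrt s * Gamma s)"
    by (rule mult_left_mono[OF Gamma_plus_half_le[OF s]]) simp
  also have "\<dots> < sin (pi * s) ^ 2 * (sqrt s * Gamma s)"
    using cs s by (intro mult_strict_right_mono) simp_all
  finally have "cos (pi * s) ^ 2 * Gamma (s + 1/2) < sqrt s * (sin (pi * s) ^ 2 * Gamma s)"
    by (simp add: mult_ac)
  hence "sqrt 2 * 2 powr s / pi * (cos (pi * s) ^ 2 * Gamma (s + 1/2))
         < sqrt 2 * 2 powr s / pi * (sqrt s * (sin (pi * s) ^ 2 * Gamma s))"
    by (intro mult_strict_left_mono) simp_all
  moreover have e: "2 * s + 1/2 - 1 = 2 * s - 1/2" "2 * s + 1/2 - 1/2 = 2 * s" by simp_all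
  ultimately show ?thesis
    unfolding n_eq e pcfV_0_eq_cos[OF s] pcfV_0_eq_sin[OF s] real_sqrt_mult by (simp add: mult_ac)
qed

lemma pcfV_0_lower:
  assumes k: "k \<ge> 1" and n: "2 * real k < n" "n < 2 * real k + 1"
  shows "sqrt (n - 3/2) * pcfV (n - 1) 0 < pcfV n 0"
proof -
  define s where "s = n/2 - 1/4"
  have "real k \<ge> 1" using k by simp
  hence s: "s > 1/2" and n_eq: "n = 2 * s + 1/2" using n unfolding s_def by (simp_all add: field_simps)
  have "(-1) ^ (2 * k) * sin (pi * n) > 0" using n sin_pi_sign[of "2 * k" n] by simp
  hence cs: "sin (pi * s) ^ 2 < cos (pi * s) ^ 2" using cos_sq_minus_sin_sq_pi[of s] n_eq by simp
  have "sqrt (s - 1/2) * (sin (pi * s) ^ 2 * Gamma s) < cos (pi * s) ^ 2 * (sqrt (s - 1/2) * Gamma s)"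
    using mult_strict_right_mono[OF cs, of "sqrt (s - 1/2) * Gamma s"] s by (simp add: mult_ac)
  also have "\<dots> \<le> cos (pi * s) ^ 2 * Gamma (s + 1/2)"
    by (rule mult_left_mono[OF Gamma_plus_half_ge[OF s]]) simp
  finally have "sqrt 2 * 2 powr s / pi * (sqrt (s - 1/2) * (sin (pi * s) ^ 2 * Gamma s))
                < sqrt 2 * 2 powr s / pi * (cos (pi * s) ^ 2 * Gamma (s + 1/2))"
    by (intro mult_strict_left_mono) simp_all
  moreover have "s > 0" using s by simp
  moreover have e: "2 * s + 1/2 - 1 = 2 * s - 1/2" "2 * s + 1/2 - 3/2 = 2 * (s - 1/2)" by simp_all
  ultimately show ?thesis
    unfolding n_eq e pcfV_0_eq_cos[OF \<open>s > 0\<close>] pcfV_0_eq_sin[OF \<open>s > 0\<close>] real_sqrt_mult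
    by (simp add: mult_ac)
qed

section \<open>Comparison for Riccati equations\<close>

lemma pos_if_deriv_pos_at_zeros:
  fixes g g' :: "real \<Rightarrow> real"
  assumes deriv: "\<And>t. (g has_real_derivative g' t) (at t)"
    and g0: "g 0 > 0"
    and zeros: "\<And>t. t > 0 \<Longrightarrow> g t = 0 \<Longrightarrow> g' t > 0"
    and x: "x > 0"
  shows "g x > 0"
proof (rule ccontr)
  assume "\<not> g x > 0"
  have cont: "continuous_on S g" for S
    using deriv by (meson DERIV_isCont continuous_at_imp_continuous_on)
  define Z where "Z = {t \<in> {0..x}. g t = 0}"
  have "\<exists>t. 0 \<le> t \<and> t \<le> x \<and> g t = 0"
    using IVT2'[of g x 0 0, OF _ _ _ cont] \<open>\<not> g x > 0\<close> g0 x by simp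
  hence "Z \<noteq> {}" unfolding Z_def by auto
  moreover have Z_bdd: "bdd_below Z" unfolding Z_def by (rule bdd_belowI[of _ 0]) auto
  moreover have "closed Z" unfolding Z_def by (intro continuous_closed_preimage_constant cont) simp
  ultimately have "Inf Z \<in> Z" by (rule closed_contains_Inf)
  define t1 where "t1 = Inf Z"
  have t1: "g t1 = 0" "t1 > 0"
    using \<open>Inf Z \<in> Z\<close> g0 unfolding t1_def Z_def by (auto simp: order.order_iff_strict)
  have before: "g t > 0" if t: "0 \<le> t" "t < t1" for t
  proof (rule ccontr)
    assume "\<not> g t > 0"
    then obtain u where "0 \<le> u" "u \<le> t" "g u = 0"
      using IVT2'[of g t 0 0, OF _ _ _ cont] g0 t(1) by auto
    hence "u \<in> Z" using t t1 \<open>Inf Z \<in> Z\<close> unfolding t1_def Z_def by auto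
    hence "t1 \<le> u" unfolding t1_def by (rule cInf_lower[OF _ Z_bdd])
    thus False using \<open>u \<le> t\<close> t(2) by simp
  qed
  obtain d where d: "d > 0" "\<And>h. h > 0 \<Longrightarrow> h < d \<Longrightarrow> g (t1 - h) < g t1"
    using DERIV_pos_inc_left[OF deriv zeros[OF t1(2,1)]] by blast
  define h where "h = min (d/2) (t1/2)"
  have "g (t1 - h) < 0" using d t1 unfolding h_def by auto
  moreover have "g (t1 - h) > 0" using before[of "t1 - h"] d(1) t1 unfolding h_def by auto
  ultimately show False by simp
qed

text \<open>
  For such \<open>w > 0\<close> and \<open>v\<close>, the ratio \<open>v / w\<close> solves \<open>r' = b + (p + q) t r - r\<^sup>2\<close>.
  The comparison lemmas work with the gap \<open>l w - v\<close> instead, which avoids dividing by \<open>w\<close>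
  (in the Hermite case \<open>w\<close> vanishes at the origin).
\<close>

locale riccati_pair =
  fixes w v :: "real \<Rightarrow> real" and p q b :: real
  assumes w_deriv: "\<And>t. (w has_real_derivative v t - p * t * w t) (at t)"
    and v_deriv: "\<And>t. (v has_real_derivative q * t * v t + b * w t) (at t)"
    and w_pos: "\<And>t. t > 0 \<Longrightarrow> w t > 0"
begin

lemma gap_has_real_derivative:
  assumes "(l has_real_derivative l') (at t)"
  shows "((\<lambda>s. l s * w s - v s) has_real_derivative
            l' * w t + l t * (v t - p * t * w t) - (q * t * v t + b * w t)) (at t)"
  by (rule DERIV_cong[OF DERIV_diff[OF DERIV_mult[OF assms w_deriv] v_deriv]]) simp

lemma gap_deriv_at_crossing:
  assumes "v t = l t * w t"
  shows "l' * w t + l t * (v t - p * t * w t) - (q * t * v t + b * w t)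
         = w t * (l' - (b + (p + q) * t * l t - (l t)\<^sup>2))"
  unfolding assms by (simp add: algebra_simps power2_eq_square)

lemma ratio_below_supersolution:
  assumes l: "\<And>t. (l has_real_derivative l' t) (at t)"
    and super: "\<And>t. t > 0 \<Longrightarrow> b + (p + q) * t * l t - (l t)\<^sup>2 < l' t"
    and init: "v 0 < l 0 * w 0" and x: "x > 0"
  shows "v x < l x * w x"
proof -
  have "(\<lambda>s. l s * w s - v s) x > 0"
  proof (rule pos_if_deriv_pos_at_zeros[OF gap_has_real_derivative[OF l]])
    fix t assume t: "t > 0" "l t * w t - v t = 0"
    hence "v t = l t * w t" by simp
    from gap_deriv_at_crossing[of t l "l' t", OF this]
    show "l' t * w t + l t * (v t - p * t * w t) - (q * t * v t + b * w t) > 0"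
      using w_pos[OF t(1)] super[OF t(1)] by simp
  qed (use init x in simp_all)
  thus ?thesis by simp
qed

lemma ratio_above_subsolution:
  assumes l: "\<And>t. (l has_real_derivative l' t) (at t)"
    and sub: "\<And>t. t > 0 \<Longrightarrow> l' t < b + (p + q) * t * l t - (l t)\<^sup>2"
    and init: "l 0 * w 0 < v 0" and x: "x > 0"
  shows "l x * w x < v x"
proof -
  have "(\<lambda>s. - (l s * w s - v s)) x > 0"
  proof (rule pos_if_deriv_pos_at_zeros[OF DERIV_minus[OF gap_has_real_derivative[OF l]]])
    fix t assume t: "t > 0" "- (l t * w t - v t) = 0"
    hence "v t = l t * w t" by simp
    from gap_deriv_at_crossing[of t l "l' t", OF this]
    show "- (l' t * w t + l t * (v t - p * t * w t) - (q * t * v t + b * w t)) > 0"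
      using w_pos[OF t(1)] sub[OF t(1)] by (simp add: mult_pos_neg)
  qed (use init x in simp_all)
  thus ?thesis by simp
qed

end

definition riccati_root :: "real \<Rightarrow> real \<Rightarrow> real \<Rightarrow> real" where
  "riccati_root a c t = (a * t + sqrt ((a * t)\<^sup>2 + 4 * c)) / 2"

lemma riccati_root_at_0: "riccati_root a c 0 = sqrt c"
proof -
  have "sqrt (4 * c) = sqrt (2\<^sup>2) * sqrt c" by (simp add: real_sqrt_mult)
  thus ?thesis unfolding riccati_root_def by simp
qed

lemma riccati_root_one: "riccati_root 1 c t = (t + sqrt (4 * c + t\<^sup>2)) / 2"
  unfolding riccati_root_def by (simp add: add.commute)

lemma riccati_root_two: "riccati_root 2 c t = t + sqrt (c + t\<^sup>2)"
proof -
  have "sqrt ((2 * t)\<^sup>2 + 4 * c) = sqrt (2\<^sup>2) * sqrt (c + t\<^sup>2)"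
    by (subst real_sqrt_mult[symmetric]) (simp add: algebra_simps power2_eq_square)
  thus ?thesis unfolding riccati_root_def by simp
qed

lemma riccati_root_eq:
  assumes "c \<ge> 0" shows "(riccati_root a c t)\<^sup>2 - a * t * riccati_root a c t = c"
proof -
  have "(sqrt ((a * t)\<^sup>2 + 4 * c))\<^sup>2 = (a * t)\<^sup>2 + 4 * c" using assms by simp
  thus ?thesis unfolding riccati_root_def by (simp add: power2_eq_square algebra_simps add_divide_distrib)
qed

lemma riccati_root_has_real_derivative:
  assumes a: "a > 0" and c: "c > 0"
  shows "(riccati_root a c has_real_derivative a / 2 * (1 + a * t / sqrt ((a * t)\<^sup>2 + 4 * c))) (at t)"
proof -
  have "(a * t)\<^sup>2 + 4 * c > 0" using c by (simp add: add_nonneg_pos)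
  thus ?thesis unfolding riccati_root_def[abs_def]
    by (auto intro!: derivative_eq_intros simp: field_simps power2_eq_square)
qed

lemma riccati_root_deriv_bounds:
  assumes a: "a > 0" and c: "c > 0" and t: "t > 0"
  shows "0 < a / 2 * (1 + a * t / sqrt ((a * t)\<^sup>2 + 4 * c))"
    and "a / 2 * (1 + a * t / sqrt ((a * t)\<^sup>2 + 4 * c)) < a"
proof -
  define S where "S = sqrt ((a * t)\<^sup>2 + 4 * c)"
  have "a * t < S"
    using a c t real_sqrt_less_iff[of "(a * t)\<^sup>2" "(a * t)\<^sup>2 + 4 * c"] unfolding S_def by simp
  moreover have "a * t > 0" using a t by simp
  ultimately have "0 < a * t / S" "a * t / S < 1" by simp_all
  thus "0 < a / 2 * (1 + a * t / sqrt ((a * t)\<^sup>2 + 4 * c))"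
    and "a / 2 * (1 + a * t / sqrt ((a * t)\<^sup>2 + 4 * c)) < a"
    using a unfolding S_def[symmetric] by simp_all
qed

context riccati_pair
begin

lemma ratio_below_riccati_root:
  assumes pq: "p + q > 0" and b: "b > 0"
    and init: "v 0 < riccati_root (p + q) b 0 * w 0" and x: "x > 0"
  shows "v x < riccati_root (p + q) b x * w x"
  using ratio_below_supersolution[OF riccati_root_has_real_derivative[OF pq b] _ init x]
    riccati_root_eq b riccati_root_deriv_bounds(1)[OF pq b]
  by (simp add: algebra_simps)

lemma ratio_above_riccati_root:
  assumes pq: "p + q > 0" and b: "b > p + q"
    and init: "riccati_root (p + q) (b - (p + q)) 0 * w 0 < v 0" and x: "x > 0"
  shows "riccati_root (p + q) (b - (p + q)) x * w x < v x"
proof -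
  have c: "b - (p + q) > 0" using b by simp
  show ?thesis
    using ratio_above_subsolution[OF riccati_root_has_real_derivative[OF pq c] _ init x]
      riccati_root_eq c riccati_root_deriv_bounds(2)[OF pq c]
    by (simp add: algebra_simps)
qed

end

section \<open>Bounds for \<open>V(n,x) / V(n-1,x)\<close>\<close>

lemma riccati_pair_pcfV:
  assumes "n > 1/2"
  shows "riccati_pair (pcfV (n - 1)) (pcfV n) (1/2) (1/2) (n - 1/2)"
proof
  show "(pcfV (n - 1) has_real_derivative pcfV n t - 1/2 * t * pcfV (n - 1) t) (at t)" for t
    using pcfV_has_real_derivative[of "n - 1" t] by simp
  show "(pcfV n has_real_derivative 1/2 * t * pcfV n t + (n - 1/2) * pcfV (n - 1) t) (at t)" for t
    using pcfV_has_real_derivative'[of n t] by simp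
  show "t > 0 \<Longrightarrow> pcfV (n - 1) t > 0" for t
    using assms by (intro pcfV_pos) simp_all
qed

lemma pcfV_ratio_upper:
  assumes k: "k \<ge> 1" and n: "2 * real k - 1 < n" "n < 2 * real k" and x: "x > 0"
  shows "pcfV n x / pcfV (n - 1) x < (x + sqrt (4 * n - 2 + x\<^sup>2)) / 2"
proof -
  have "real k \<ge> 1" using k by simp
  hence n1: "n > 1" using n by linarith
  interpret riccati_pair "pcfV (n - 1)" "pcfV n" "1/2" "1/2" "n - 1/2"
    by (rule riccati_pair_pcfV) (use n1 in simp)
  have "pcfV n 0 < riccati_root 1 (n - 1/2) 0 * pcfV (n - 1) 0"
    using pcfV_0_upper[OF k n] by (simp add: riccati_root_at_0)
  hence "pcfV n x < riccati_root 1 (n - 1/2) x * pcfV (n - 1) x"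
    using ratio_below_riccati_root[of x] n1 x by simp
  moreover have "pcfV (n - 1) x > 0" using n1 x by (intro pcfV_pos) simp_all
  ultimately show ?thesis by (simp add: divide_less_eq riccati_root_one algebra_simps)
qed

lemma pcfV_ratio_lower:
  assumes k: "k \<ge> 1" and n: "2 * real k < n" "n < 2 * real k + 1" and x: "x > 0"
  shows "(x + sqrt (4 * n - 6 + x\<^sup>2)) / 2 < pcfV n x / pcfV (n - 1) x"
proof -
  have "real k \<ge> 1" using k by simp
  hence n2: "n > 2" using n by linarith
  interpret riccati_pair "pcfV (n - 1)" "pcfV n" "1/2" "1/2" "n - 1/2"
    by (rule riccati_pair_pcfV) (use n2 in simp)
  have "riccati_root 1 (n - 3/2) 0 * pcfV (n - 1) 0 < pcfV n 0"
    using pcfV_0_lower[OF k n] by (simp add: riccati_root_at_0)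
  hence "riccati_root 1 (n - 3/2) x * pcfV (n - 1) x < pcfV n x"
    using ratio_above_riccati_root[of x] n2 x by simp
  moreover have "pcfV (n - 1) x > 0" using n2 x by (intro pcfV_pos) simp_all
  ultimately show ?thesis by (simp add: less_divide_eq riccati_root_one algebra_simps)
qed

section \<open>Hermite polynomials on the imaginary axis\<close>

fun ihermite :: "nat \<Rightarrow> real \<Rightarrow> real" where
  "ihermite 0 x = 1"
| "ihermite (Suc 0) x = 2 * x"
| "ihermite (Suc (Suc n)) x = 2 * x * ihermite (Suc n) x + 2 * real (Suc n) * ihermite n x"

lemma hermite_imag: "hermite n (\<i> * complex_of_real x) = \<i> ^ n * complex_of_real (ihermite n x)"
proof (induction n x rule: ihermite.induct)
  case (3 n x)
  have "hermite (Suc (Suc n)) (\<i> * of_real x)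
        = 2 * (\<i> * of_real x) * (\<i> ^ Suc n * of_real (ihermite (Suc n) x))
          - 2 * of_nat (Suc n) * (\<i> ^ n * of_real (ihermite n x))"
    using 3 by simp
  also have "\<dots> = \<i> ^ Suc (Suc n) * of_real (ihermite (Suc (Suc n)) x)"
    by (simp add: algebra_simps)
  finally show ?case .
qed simp_all

lemma ihermite_Suc: "ihermite (Suc n) x = 2 * x * ihermite n x + 2 * real n * ihermite (n - 1) x"
  by (cases n) simp_all

lemma ihermite_has_real_derivative:
  "(ihermite n has_real_derivative 2 * real n * ihermite (n - 1) x) (at x)"
proof (induction n x rule: ihermite.induct)
  case (2 x)
  show ?case by (auto intro!: derivative_eq_intros)
next
  case (3 n x)
  show ?case unfolding ihermite.simps(3)[abs_def]
    by (rule DERIV_cong[OF DERIV_add[OF DERIV_mult[OF DERIV_cmult[OF DERIV_ident] 3(1)] DERIV_cmult[OF 3(2)]]])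
       (simp add: ihermite_Suc[of n x] algebra_simps)
qed simp

lemma ihermite_pos: "x > 0 \<Longrightarrow> ihermite n x > 0"
  by (induction n x rule: ihermite.induct) (simp_all add: add_pos_pos)

lemma ihermite_at_0: "ihermite (2 * k) 0 > 0 \<and> ihermite (2 * k + 1) 0 = 0"
proof (induction k)
  case (Suc k)
  have "2 * Suc k = Suc (Suc (2 * k))" "2 * Suc k + 1 = Suc (Suc (2 * k + 1))" by simp_all
  thus ?case using Suc by simp
qed simp

lemma ihermite_minus: "ihermite n (- x) = (-1) ^ n * ihermite n x"
  by (induction n x rule: ihermite.induct) (simp_all add: algebra_simps)

lemma riccati_pair_ihermite: "riccati_pair (ihermite n) (ihermite (Suc n)) 2 0 (2 * (real n + 1))"
proof
  show "(ihermite n has_real_derivative ihermite (Suc n) t - 2 * t * ihermite n t) (at t)" for t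
    using ihermite_has_real_derivative[of n t] by (simp add: ihermite_Suc)
  show "(ihermite (Suc n) has_real_derivative 0 * t * ihermite (Suc n) t + 2 * (real n + 1) * ihermite n t) (at t)" for t
    using ihermite_has_real_derivative[of "Suc n" t] by (simp add: algebra_simps)
qed (rule ihermite_pos)

lemma ihermite_ratio_upper:
  assumes x: "x > 0"
  shows "ihermite (2 * k + 1) x < (x + sqrt (4 * real k + 2 + x\<^sup>2)) * ihermite (2 * k) x"
proof -
  interpret riccati_pair "ihermite (2 * k)" "ihermite (Suc (2 * k))" 2 0 "2 * (real (2 * k) + 1)"
    by (rule riccati_pair_ihermite)
  have "ihermite (Suc (2 * k)) 0 < riccati_root 2 (2 * (real (2 * k) + 1)) 0 * ihermite (2 * k) 0"
    using ihermite_at_0[of k] by (simp add: riccati_root_at_0)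
  from ratio_below_riccati_root[OF _ _ _ x] this
  show ?thesis by (simp add: riccati_root_two algebra_simps)
qed

lemma ihermite_ratio_lower:
  assumes k: "k \<ge> 1" and x: "x > 0"
  shows "(x + sqrt (4 * real k - 2 + x\<^sup>2)) * ihermite (2 * k - 1) x < ihermite (2 * k) x"
proof -
  define m where "m = 2 * k - 1"
  have m: "2 * k = Suc m" "real m = 2 * real k - 1" unfolding m_def using k by (simp_all add: of_nat_diff)
  interpret riccati_pair "ihermite m" "ihermite (Suc m)" 2 0 "2 * (real m + 1)"
    by (rule riccati_pair_ihermite)
  have "m = 2 * (k - 1) + 1" unfolding m_def using k by simp
  hence "ihermite m 0 = 0" "ihermite (Suc m) 0 > 0"
    using ihermite_at_0[of "k - 1"] ihermite_at_0[of k] m(1) by simp_all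
  hence "riccati_root 2 (2 * (real m + 1) - 2) 0 * ihermite m 0 < ihermite (Suc m) 0" by simp
  from ratio_above_riccati_root[OF _ _ _ x] this
  show ?thesis unfolding m_def[symmetric] m(1) using m(2) k by (simp add: riccati_root_two algebra_simps)
qed

lemma hermite_imag_ratio:
  "- \<i> * hermite (Suc n) (\<i> * of_real x) / hermite n (\<i> * of_real x)
   = of_real (ihermite (Suc n) x / ihermite n x)"
  by (simp add: hermite_imag)

lemma hermite_imag_ratio':
  "\<i> * hermite n (\<i> * of_real x) / hermite (Suc n) (\<i> * of_real x)
   = of_real (ihermite n x / ihermite (Suc n) x)"
  unfolding hermite_imag power_Suc by (simp add: mult.assoc)

lemma hermite_imag_turan_ratio:
  "(hermite (Suc n) (\<i> * of_real x))\<^sup>2 / (hermite n (\<i> * of_real x) * hermite (Suc (Suc n)) (\<i> * of_real x))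
   = of_real ((ihermite (Suc n) x)\<^sup>2 / (ihermite n x * ihermite (Suc (Suc n)) x))"
proof -
  have "(\<i> * \<i> ^ n * of_real (ihermite (Suc n) x))\<^sup>2
        = \<i> ^ n * (\<i> * (\<i> * \<i> ^ n)) * (of_real (ihermite (Suc n) x))\<^sup>2"
    by (simp add: power2_eq_square algebra_simps)
  thus ?thesis unfolding hermite_imag power_Suc by simp
qed

lemma sqrt_ratio_mult_le:
  assumes "0 \<le> c" "c \<le> d" "0 < d" "0 \<le> x"
  shows "sqrt (c / d) * (x + sqrt (d + x\<^sup>2)) \<le> x + sqrt (c + x\<^sup>2)"
proof -
  define r where "r = sqrt (c / d)"
  have r: "0 \<le> r" "r \<le> 1" "r\<^sup>2 = c / d" unfolding r_def using assms by simp_all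
  have "r * sqrt (d + x\<^sup>2) = sqrt (r\<^sup>2 * (d + x\<^sup>2))" using r(1) by (simp add: real_sqrt_mult)
  also have "\<dots> = sqrt (c + r\<^sup>2 * x\<^sup>2)" using r(3) assms(3) by (simp add: field_simps)
  also have "\<dots> \<le> sqrt (c + x\<^sup>2)"
    using r(1,2) by (simp add: mult_left_le_one_le power_le_one)
  finally have "r * sqrt (d + x\<^sup>2) \<le> sqrt (c + x\<^sup>2)" .
  moreover have "r * x \<le> x" using r(1,2) assms(4) by (simp add: mult_left_le_one_le)
  ultimately show ?thesis unfolding r_def[symmetric] by (simp add: distrib_left)
qed

lemma ihermite_turan_pos:
  assumes k: "k \<ge> 1" and x: "x > 0"
  shows "sqrt ((real k - 1/2) / (real k + 1/2))
         < (ihermite (2 * k) x)\<^sup>2 / (ihermite (2 * k - 1) x * ihermite (2 * k + 1) x)"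
proof -
  define P B R where "P = ihermite (2 * k - 1) x" and "B = ihermite (2 * k) x" and "R = ihermite (2 * k + 1) x"
  define f1 f2 where "f1 = x + sqrt (4 * real k - 2 + x\<^sup>2)" and "f2 = x + sqrt (4 * real k + 2 + x\<^sup>2)"
  have pos: "P > 0" "B > 0" "R > 0" unfolding P_def B_def R_def using x by (simp_all add: ihermite_pos)
  have "real k \<ge> 1" using k by simp
  hence f: "f1 > 0" "f2 > 0" unfolding f1_def f2_def using x by (simp_all add: add_pos_nonneg)
  have ratio: "(4 * real k - 2) / (4 * real k + 2) = (real k - 1/2) / (real k + 1/2)"
    by (simp add: field_simps)
  have "sqrt ((real k - 1/2) / (real k + 1/2)) * f2 \<le> f1"
    using sqrt_ratio_mult_le[of "4 * real k - 2" "4 * real k + 2" x] \<open>real k \<ge> 1\<close> x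
    unfolding ratio f1_def f2_def by simp
  hence "sqrt ((real k - 1/2) / (real k + 1/2)) \<le> f1 / f2" using f(2) by (simp add: pos_le_divide_eq)
  also have "f1 / f2 < B\<^sup>2 / (P * R)"
  proof -
    have "f1 * P < B" using ihermite_ratio_lower[OF k x] unfolding f1_def P_def B_def .
    moreover have "R < f2 * B" using ihermite_ratio_upper[OF x, of k] unfolding f2_def B_def R_def .
    ultimately have "(f1 * P) * R < B * (f2 * B)" using pos by (intro mult_strict_mono) simp_all
    thus ?thesis using pos f(2) by (simp add: frac_less_eq field_simps power2_eq_square)
  qed
  finally show ?thesis unfolding P_def B_def R_def .
qed

lemma ihermite_turan:
  assumes k: "k \<ge> 1" and x: "x \<noteq> 0"
  shows "sqrt ((real k - 1/2) / (real k + 1/2))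
         < (ihermite (2 * k) x)\<^sup>2 / (ihermite (2 * k - 1) x * ihermite (2 * k + 1) x)"
proof (cases "x > 0")
  case False
  have "(-1::real) ^ (2 * k - 1) * (-1) ^ (2 * k + 1) = 1"
    unfolding power_add[symmetric] using k by (simp add: algebra_simps)
  hence even: "ihermite (2 * k) (- x) = ihermite (2 * k) x"
    and odd: "ihermite (2 * k - 1) (- x) * ihermite (2 * k + 1) (- x) = ihermite (2 * k - 1) x * ihermite (2 * k + 1) x"
    unfolding ihermite_minus by (simp_all add: algebra_simps)
  have "sqrt ((real k - 1/2) / (real k + 1/2))
        < (ihermite (2 * k) (- x))\<^sup>2 / (ihermite (2 * k - 1) (- x) * ihermite (2 * k + 1) (- x))"
    by (rule ihermite_turan_pos[OF k]) (use False x in simp)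
  thus ?thesis unfolding even odd .
qed (rule ihermite_turan_pos[OF k])

lemma hermite_imag_ratio_upper:
  assumes x: "x > 0"
  shows "let q = - \<i> * hermite (2 * k + 1) (\<i> * of_real x) / hermite (2 * k) (\<i> * of_real x)
         in q \<in> \<real> \<and> Re q < x + sqrt (4 * real k + 2 + x\<^sup>2)"
  using hermite_imag_ratio[of "2 * k" x] ihermite_ratio_upper[OF x, of k] ihermite_pos[OF x, of "2 * k"]
  by (simp add: divide_less_eq)

lemma hermite_imag_ratio_lower:
  assumes k: "k \<ge> 1" and x: "x > 0"
  shows "let q = \<i> * hermite (2 * k - 1) (\<i> * of_real x) / hermite (2 * k) (\<i> * of_real x)
         in q \<in> \<real> \<and> Re q < inverse (x + sqrt (4 * real k - 2 + x\<^sup>2))"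
proof -
  define f where "f = x + sqrt (4 * real k - 2 + x\<^sup>2)"
  have "real k \<ge> 1" using k by simp
  hence "f > 0" unfolding f_def using x by (simp add: add_pos_nonneg)
  moreover have "f * ihermite (2 * k - 1) x < ihermite (2 * k) x"
    using ihermite_ratio_lower[OF k x] unfolding f_def .
  ultimately have "ihermite (2 * k - 1) x / ihermite (2 * k) x < inverse f"
    using ihermite_pos[OF x, of "2 * k"] by (simp add: divide_less_eq less_divide_eq inverse_eq_divide mult.commute)
  moreover have "Suc (2 * k - 1) = 2 * k" using k by simp
  ultimately show ?thesis using hermite_imag_ratio'[of "2 * k - 1" x] unfolding f_def by simp
qed

lemma hermite_imag_turan:
  assumes k: "k \<ge> 1" and x: "x \<noteq> 0"
  shows "let q = (hermite (2 * k) (\<i> * of_real x))\<^sup>2 /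
                 (hermite (2 * k - 1) (\<i> * of_real x) * hermite (2 * k + 1) (\<i> * of_real x))
         in q \<in> \<real> \<and> Re q > sqrt ((real k - 1/2) / (real k + 1/2))"
proof -
  have "Suc (2 * k - 1) = 2 * k" "Suc (Suc (2 * k - 1)) = 2 * k + 1" using k by simp_all
  thus ?thesis using hermite_imag_turan_ratio[of "2 * k - 1" x] ihermite_turan[OF k x] by simp
qed

theorem theorem15:
  shows
  "(\<forall>(k::nat) (n::real) (x::real). k \<ge> 1 \<and> 2 * real k - 1 < n \<and> n < 2 * real k \<and> x > 0 \<longrightarrow>
       pcfV n x / pcfV (n - 1) x < (x + sqrt (4 * n - 2 + x\<^sup>2)) / 2)
 \<and> (\<forall>(k::nat) (n::real) (x::real). k \<ge> 1 \<and> 2 * real k < n \<and> n < 2 * real k + 1 \<and> x > 0 \<longrightarrow>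
       (x + sqrt (4 * n - 6 + x\<^sup>2)) / 2 < pcfV n x / pcfV (n - 1) x)
 \<and> (\<forall>(k::nat) (x::real). x > 0 \<longrightarrow>
       (let q = - \<i> * hermite (2 * k + 1) (\<i> * of_real x) / hermite (2 * k) (\<i> * of_real x)
        in q \<in> \<real> \<and> Re q < x + sqrt (4 * real k + 2 + x\<^sup>2)))
 \<and> (\<forall>(k::nat) (x::real). k \<ge> 1 \<and> x > 0 \<longrightarrow>
       (let q = \<i> * hermite (2 * k - 1) (\<i> * of_real x) / hermite (2 * k) (\<i> * of_real x)
        in q \<in> \<real> \<and> Re q < inverse (x + sqrt (4 * real k - 2 + x\<^sup>2))))
 \<and> (\<forall>(k::nat) (x::real). k \<ge> 1 \<and> x \<noteq> 0 \<longrightarrow>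
       (let q = (hermite (2 * k) (\<i> * of_real x))\<^sup>2 /
                (hermite (2 * k - 1) (\<i> * of_real x) * hermite (2 * k + 1) (\<i> * of_real x))
        in q \<in> \<real> \<and> Re q > sqrt ((real k - 1/2) / (real k + 1/2))))"
  using pcfV_ratio_upper pcfV_ratio_lower hermite_imag_ratio_upper hermite_imag_ratio_lower hermite_imag_turan
  by blast

end
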